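(* Let $(M,d)$ be a metric space and let $S$ be a semitopological semigroup which is left reversible or left amenable. Let $\{T_s:s\in S\}$ be a representation of $S$ on $M$ such that the map $S\times M\ni(s,x)\mapsto T_sx$ is jointly continuous and the family $\{T_s:s\in S\}$ is (as a semigroup under composition) generated by uniformly asymptotically regular mappings. Then every nonempty compact set $K\subset M$ with $T_s(K)\subset K$ for all $s\in S$ contains a common fixed point of all $T_s$, $s\in S$.
   Context: A semitopological semigroup is a semigroup with a Hausdorff topology making $s\mapsto ts$, $s\mapsto st$ continuous for each $t$. A representation: maps $T_s:M\to M$ with $T_{st}=T_s\circ T_t$. $S$ is left reversible if any two closed right ideals of $S$ (sets $I$ with $IS\subset I$) have nonempty intersection. $S$ is left amenable if there is a left invariant mean on $LUC(S)$: with $(l_sf)(t)=f(st)$, $LUC(S)$ is the space of bounded continuous $f$ with $s\mapsto l_sf$ norm-continuous into $C_b(S)$, and a left invariant mean is $\mu\in LUC(S)^*$ with $\|\mu\|=\mu(1)=1$ and $\mu(l_sf)=\mu(f)$. A map $T:M\to M$ is uniformly asymptotically regular if $\lim_n\sup_{x\in M}d(T^{n+1}x,T^nx)=0$. *)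

theory Defs
  imports "HOL-Analysis.Analysis"
begin

definition semitopological :: "('a::{semigroup_mult,t2_space}) itself \<Rightarrow> bool" where
  "semitopological _ \<longleftrightarrow>
     (\<forall>t::'a. continuous_on UNIV (\<lambda>s. t * s) \<and> continuous_on UNIV (\<lambda>s. s * t))"

definition right_ideal :: "('a::semigroup_mult) set \<Rightarrow> bool" where
  "right_ideal I \<longleftrightarrow> (\<forall>x\<in>I. \<forall>s. x * s \<in> I)"

definition left_reversible :: "('a::{semigroup_mult,topological_space}) itself \<Rightarrow> bool" where
  "left_reversible _ \<longleftrightarrow>
     (\<forall>I J :: 'a set. I \<noteq> {} \<and> J \<noteq> {} \<and> closed I \<and> closed J \<and> right_ideal I \<and> right_ideal J
        \<longrightarrow> I \<inter> J \<noteq> {})"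

text \<open>LUC(S): bounded continuous real functions f such that s \<mapsto> l_s f is
  continuous into C_b(S) with the sup norm, where (l_s f)(t) = f(st).\<close>
definition LUC :: "('a::{semigroup_mult,topological_space} \<Rightarrow> real) set" where
  "LUC = {f. continuous_on UNIV f \<and> bounded (range f) \<and>
      (\<forall>s0. \<forall>e>0. \<exists>U. open U \<and> s0 \<in> U \<and> (\<forall>s\<in>U. \<forall>t. \<bar>f (s * t) - f (s0 * t)\<bar> \<le> e))}"

definition left_invariant_mean ::
    "(('a::{semigroup_mult,topological_space} \<Rightarrow> real) \<Rightarrow> real) \<Rightarrow> bool" where
  "left_invariant_mean \<mu> \<longleftrightarrow>
     (\<forall>f\<in>LUC. \<forall>g\<in>LUC. \<mu> (\<lambda>t. f t + g t) = \<mu> f + \<mu> g) \<and>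
     (\<forall>f\<in>LUC. \<forall>c. \<mu> (\<lambda>t. c * f t) = c * \<mu> f) \<and>
     (\<forall>f\<in>LUC. \<bar>\<mu> f\<bar> \<le> (SUP t. \<bar>f t\<bar>)) \<and>
     \<mu> (\<lambda>t. 1) = 1 \<and>
     (\<forall>f\<in>LUC. \<forall>s. \<mu> (\<lambda>t. f (s * t)) = \<mu> f)"

definition left_amenable :: "('a::{semigroup_mult,topological_space}) itself \<Rightarrow> bool" where
  "left_amenable _ \<longleftrightarrow> (\<exists>\<mu> :: ('a \<Rightarrow> real) \<Rightarrow> real. left_invariant_mean \<mu>)"

definition unif_asymp_regular :: "('b::metric_space \<Rightarrow> 'b) \<Rightarrow> bool" where
  "unif_asymp_regular T \<longleftrightarrow>
     (\<forall>e>0. \<exists>N. \<forall>n\<ge>N. \<forall>x. dist ((T ^^ Suc n) x) ((T ^^ n) x) \<le> e)"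

inductive_set gen_semigroup :: "('b \<Rightarrow> 'b) set \<Rightarrow> ('b \<Rightarrow> 'b) set" for G where
  gen: "g \<in> G \<Longrightarrow> g \<in> gen_semigroup G"
| comp: "f \<in> gen_semigroup G \<Longrightarrow> g \<in> gen_semigroup G \<Longrightarrow> f \<circ> g \<in> gen_semigroup G"

end

theory Submission imports Defs begin

(* The compact sets T_s K have the finite intersection property. Under left reversibility, the
   closures of the left multiples sS are closed right ideals, so finitely many of them share a
   point r, and T_r K lies in each of the corresponding T_s K. Under left amenability, if finitely
   many T_s K had no common point in K, each orbit function t \<mapsto> d(T_t x, T_s K) would have mean
   zero, since it vanishes after left translation by s; yet their sum is bounded below by the
   positive minimum over K of \<Sum>_s d(., T_s K). By compactness some y \<in> K lies in every T_s K,
   hence in the range of every iterate g^(n+1) of a uniformly asymptotically regular generator g,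
   and then d(g y, y) \<le> sup_x d(g^(n+2) x, g^(n+1) x), which tends to 0. So y is fixed by the
   generators, and therefore by the whole semigroup they generate. *)

lemma continuous_on_case_prod_fixed_snd:
  "continuous_on UNIV (\<lambda>(s, x). F s x) \<Longrightarrow> continuous_on UNIV (\<lambda>s. F s x)"
  using continuous_on_compose2[of UNIV "\<lambda>(s, x). F s x" UNIV "\<lambda>s. (s, x)"]
  by (simp add: continuous_on_Pair)

lemma continuous_on_case_prod_fixed_fst:
  "continuous_on UNIV (\<lambda>(s, x). F s x) \<Longrightarrow> continuous_on UNIV (F s)"
  using continuous_on_compose2[of UNIV "\<lambda>(s, x). F s x" UNIV "\<lambda>x. (s, x)"]
  by (simp add: continuous_on_Pair)

lemma closed_image_of_compact:
  fixes T :: "'a::topological_space \<Rightarrow> 'b::topological_space \<Rightarrow> 'c::t2_space"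
  assumes "continuous_on UNIV (\<lambda>(s, x). T s x)" "compact K"
  shows "closed (T s ` K)"
  by (intro compact_imp_closed compact_continuous_image assms(2)
      continuous_on_subset[OF continuous_on_case_prod_fixed_fst[OF assms(1)]]) simp

subsection \<open>Fixed points of semigroups generated by asymptotically regular maps\<close>

lemma funpow_Suc_in_gen_semigroup:
  assumes "g \<in> gen_semigroup G"
  shows "g ^^ Suc n \<in> gen_semigroup G"
proof (induction n)
  case 0
  show ?case using assms by simp
next
  case (Suc n)
  then show ?case using gen_semigroup.comp[OF assms] by (metis funpow.simps(2))
qed

lemma gen_semigroup_fixed_point:
  assumes "f \<in> gen_semigroup G" "\<And>g. g \<in> G \<Longrightarrow> g y = y"
  shows "f y = y"
  using assms(1) by induction (auto simp: assms(2))

lemma unif_asymp_regular_fixed_point: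
  fixes g :: "'b::metric_space \<Rightarrow> 'b"
  assumes "unif_asymp_regular g" "\<And>n. y \<in> range (g ^^ Suc n)"
  shows "g y = y"
proof -
  have "dist (g y) y \<le> e" if "e > 0" for e
  proof -
    obtain N where N: "\<And>n x. n \<ge> N \<Longrightarrow> dist ((g ^^ Suc n) x) ((g ^^ n) x) \<le> e"
      using assms(1) \<open>e > 0\<close> unfolding unif_asymp_regular_def by blast
    obtain z where z: "y = (g ^^ Suc N) z" using assms(2) by blast
    have "g y = (g ^^ Suc (Suc N)) z" using z by simp
    then show ?thesis using z N[of "Suc N" z] by simp
  qed
  then show ?thesis by (metis dist_le_zero_iff field_le_epsilon add_0)
qed

lemma gen_semigroup_common_fixed_point:
  assumes "\<And>g. g \<in> G \<Longrightarrow> unif_asymp_regular g"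
    and "\<And>f. f \<in> gen_semigroup G \<Longrightarrow> y \<in> range f"
    and "f \<in> gen_semigroup G"
  shows "f y = y"
  using assms(3)
proof (rule gen_semigroup_fixed_point)
  fix g assume "g \<in> G"
  then show "g y = y"
    by (intro unif_asymp_regular_fixed_point assms(1,2) funpow_Suc_in_gen_semigroup gen_semigroup.gen)
qed

subsection \<open>Left uniformly continuous functions and invariant means\<close>

lemma LUC_bounded: "f \<in> LUC \<Longrightarrow> \<exists>B. \<forall>t. \<bar>f t\<bar> \<le> B"
  unfolding LUC_def bounded_iff by auto

lemma LUC_const: "(\<lambda>t. c) \<in> LUC"
  unfolding LUC_def by (auto intro: exI[of _ UNIV])

lemma LUC_add:
  assumes f: "f \<in> LUC" and g: "g \<in> LUC"
  shows "(\<lambda>t. f t + g t) \<in> LUC"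
proof -
  obtain Bf Bg where Bf: "\<And>t. \<bar>f t\<bar> \<le> Bf" and Bg: "\<And>t. \<bar>g t\<bar> \<le> Bg"
    using LUC_bounded[OF f] LUC_bounded[OF g] by blast
  have "\<bar>f t + g t\<bar> \<le> Bf + Bg" for t
    using abs_triangle_ineq[of "f t" "g t"] Bf[of t] Bg[of t] by linarith
  then have bounded: "bounded (range (\<lambda>t. f t + g t))" unfolding bounded_iff by auto
  have uniform: "\<exists>W. open W \<and> s0 \<in> W \<and>
      (\<forall>s\<in>W. \<forall>t. \<bar>(f (s * t) + g (s * t)) - (f (s0 * t) + g (s0 * t))\<bar> \<le> e)"
    if "e > 0" for s0 e
  proof -
    have "e / 2 > 0" using \<open>e > 0\<close> by simp
    then obtain U V where
        U: "open U" "s0 \<in> U" "\<forall>s\<in>U. \<forall>t. \<bar>f (s * t) - f (s0 * t)\<bar> \<le> e / 2" and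
        V: "open V" "s0 \<in> V" "\<forall>s\<in>V. \<forall>t. \<bar>g (s * t) - g (s0 * t)\<bar> \<le> e / 2"
      using f g unfolding LUC_def by blast
    have "\<bar>(f (s * t) + g (s * t)) - (f (s0 * t) + g (s0 * t))\<bar> \<le> e" if "s \<in> U \<inter> V" for s t
    proof -
      have "\<bar>f (s * t) - f (s0 * t)\<bar> \<le> e / 2" "\<bar>g (s * t) - g (s0 * t)\<bar> \<le> e / 2"
        using U(3) V(3) that by auto
      then show ?thesis by linarith
    qed
    then show ?thesis using U V by (intro exI[of _ "U \<inter> V"]) auto
  qed
  show ?thesis
    using f g bounded uniform unfolding LUC_def by (auto intro: continuous_on_add)
qed

lemma LUC_const_mult:
  assumes f: "f \<in> LUC"
  shows "(\<lambda>t. c * f t) \<in> LUC"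
proof -
  obtain B where "\<forall>t. \<bar>f t\<bar> \<le> B" using LUC_bounded[OF f] by blast
  then have "\<forall>t. \<bar>c * f t\<bar> \<le> \<bar>c\<bar> * B" by (simp add: abs_mult mult_left_mono)
  then have bounded: "bounded (range (\<lambda>t. c * f t))" unfolding bounded_iff by auto
  have uniform: "\<exists>U. open U \<and> s0 \<in> U \<and> (\<forall>s\<in>U. \<forall>t. \<bar>c * f (s * t) - c * f (s0 * t)\<bar> \<le> e)"
    if "e > 0" for s0 e
  proof -
    have "e / (\<bar>c\<bar> + 1) > 0" using \<open>e > 0\<close> by (simp add: add_pos_nonneg)
    then obtain U where U: "open U" "s0 \<in> U"
        "\<forall>s\<in>U. \<forall>t. \<bar>f (s * t) - f (s0 * t)\<bar> \<le> e / (\<bar>c\<bar> + 1)"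
      using f unfolding LUC_def by blast
    have "\<bar>c * f (s * t) - c * f (s0 * t)\<bar> \<le> e" if "s \<in> U" for s t
    proof -
      have "\<bar>c * f (s * t) - c * f (s0 * t)\<bar> = \<bar>c\<bar> * \<bar>f (s * t) - f (s0 * t)\<bar>"
        by (simp add: abs_mult right_diff_distrib[symmetric])
      also have "\<dots> \<le> (\<bar>c\<bar> + 1) * (e / (\<bar>c\<bar> + 1))"
        using U(3) that by (intro mult_mono) auto
      also have "\<dots> = e" by (simp add: add_pos_nonneg)
      finally show ?thesis .
    qed
    then show ?thesis using U by blast
  qed
  show ?thesis
    using f bounded uniform unfolding LUC_def by (auto intro: continuous_on_mult)
qed

lemma LUC_sum:
  assumes "finite F" "\<And>s. s \<in> F \<Longrightarrow> f s \<in> LUC"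
  shows "(\<lambda>t. \<Sum>s\<in>F. f s t) \<in> LUC"
  using assms by (induction F rule: finite_induct) (auto intro: LUC_const LUC_add)

lemma
  assumes "left_invariant_mean \<mu>"
  shows left_invariant_mean_add: "f \<in> LUC \<Longrightarrow> g \<in> LUC \<Longrightarrow> \<mu> (\<lambda>t. f t + g t) = \<mu> f + \<mu> g"
    and left_invariant_mean_const_mult: "f \<in> LUC \<Longrightarrow> \<mu> (\<lambda>t. c * f t) = c * \<mu> f"
    and left_invariant_mean_abs_le: "f \<in> LUC \<Longrightarrow> \<bar>\<mu> f\<bar> \<le> (SUP t. \<bar>f t\<bar>)"
    and left_invariant_mean_one: "\<mu> (\<lambda>t. 1) = 1"
    and left_invariant_mean_translate: "f \<in> LUC \<Longrightarrow> \<mu> (\<lambda>t. f (s * t)) = \<mu> f"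
  using assms unfolding left_invariant_mean_def by auto

lemma left_invariant_mean_zero:
  assumes "left_invariant_mean \<mu>"
  shows "\<mu> (\<lambda>t. 0) = 0"
  using left_invariant_mean_const_mult[OF assms LUC_const, of 0 1] by simp

lemma left_invariant_mean_sum:
  assumes \<mu>: "left_invariant_mean \<mu>" and "finite F" "\<And>s. s \<in> F \<Longrightarrow> f s \<in> LUC"
  shows "\<mu> (\<lambda>t. \<Sum>s\<in>F. f s t) = (\<Sum>s\<in>F. \<mu> (f s))"
  using assms(2,3)
proof (induction F rule: finite_induct)
  case empty
  show ?case using left_invariant_mean_zero[OF \<mu>] by simp
next
  case (insert s F)
  then have "\<mu> (\<lambda>t. f s t + (\<Sum>s\<in>F. f s t)) = \<mu> (f s) + \<mu> (\<lambda>t. \<Sum>s\<in>F. f s t)"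
    by (intro left_invariant_mean_add[OF \<mu>] LUC_sum) auto
  with insert show ?case by simp
qed

lemma left_invariant_mean_lower_bound:
  assumes \<mu>: "left_invariant_mean \<mu>" and f: "f \<in> LUC" and lower: "\<And>t. c \<le> f t"
  shows "c \<le> \<mu> f"
proof -
  obtain B where B: "\<And>t. \<bar>f t\<bar> \<le> B" using LUC_bounded[OF f] by blast
  have minus_f: "(\<lambda>t. (-1) * f t) \<in> LUC" by (rule LUC_const_mult[OF f])
  have "\<mu> (\<lambda>t. B + (-1) * f t) = \<mu> (\<lambda>t. B) + \<mu> (\<lambda>t. (-1) * f t)"
    by (rule left_invariant_mean_add[OF \<mu> LUC_const minus_f])
  also have "\<dots> = B - \<mu> f"
    using left_invariant_mean_const_mult[OF \<mu> LUC_const, of B 1]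
      left_invariant_mean_const_mult[OF \<mu> f, of "-1"] left_invariant_mean_one[OF \<mu>] by simp
  finally have "\<bar>B - \<mu> f\<bar> \<le> (SUP t. \<bar>B + (-1) * f t\<bar>)"
    using left_invariant_mean_abs_le[OF \<mu> LUC_add[OF LUC_const[of B] minus_f]] by simp
  also have "\<dots> \<le> B - c"
    using B lower by (intro cSUP_least) (auto simp: abs_le_iff)
  finally show ?thesis by linarith
qed

lemma orbit_function_LUC:
  fixes T :: "'a::{semigroup_mult,topological_space} \<Rightarrow> 'b::metric_space \<Rightarrow> 'b"
  assumes repr: "\<And>s t. T (s * t) = T s \<circ> T t"
    and joint: "continuous_on UNIV (\<lambda>(s, x). T s x)"
    and K: "compact K" "\<And>s. T s ` K \<subseteq> K" and x0: "x0 \<in> K"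
    and \<phi>: "continuous_on K \<phi>"
  shows "(\<lambda>t. \<phi> (T t x0)) \<in> LUC"
proof -
  have orbit: "T t x0 \<in> K" for t using K(2) x0 by blast
  have continuous: "continuous_on UNIV (\<lambda>t. \<phi> (T t x0))"
    by (rule continuous_on_compose2[OF \<phi> continuous_on_case_prod_fixed_snd[OF joint]])
       (use orbit in auto)
  have "bounded (\<phi> ` K)" using compact_continuous_image[OF \<phi> K(1)] by (rule compact_imp_bounded)
  then have bounded: "bounded (range (\<lambda>t. \<phi> (T t x0)))"
    by (rule bounded_subset) (use orbit in auto)
  have uniform: "\<exists>U. open U \<and> s0 \<in> U \<and> (\<forall>s\<in>U. \<forall>t. \<bar>\<phi> (T (s * t) x0) - \<phi> (T (s0 * t) x0)\<bar> \<le> e)"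
    if "e > 0" for s0 e
  proof -
    obtain d where d: "d > 0" "\<And>y z. y \<in> K \<Longrightarrow> z \<in> K \<Longrightarrow> dist y z < d \<Longrightarrow> dist (\<phi> y) (\<phi> z) < e"
      using compact_uniformly_continuous[OF \<phi> K(1)] \<open>e > 0\<close>
      unfolding uniformly_continuous_on_def by metis
    obtain U where U: "s0 \<in> U" "open U"
        "\<forall>s\<in>U \<inter> UNIV. \<forall>z\<in>K. dist ((\<lambda>(s, x). T s x) (s, z)) ((\<lambda>(s, x). T s x) (s0, z)) \<le> d / 2"
      using continuous_on_prod_compactE[OF continuous_on_subset[OF joint subset_UNIV] K(1) UNIV_I[of s0]
          half_gt_zero[OF d(1)]] by blast
    have "\<bar>\<phi> (T s z) - \<phi> (T s0 z)\<bar> \<le> e" if "s \<in> U" "z \<in> K" for s z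
    proof -
      have "T s z \<in> K" "T s0 z \<in> K" using K(2) \<open>z \<in> K\<close> by blast+
      moreover have "dist (T s z) (T s0 z) < d" using U(3) that \<open>d > 0\<close> by fastforce
      ultimately show ?thesis using d(2) by (fastforce simp: dist_real_def)
    qed
    then show ?thesis using U(1,2) orbit by (intro exI[of _ U]) (auto simp: repr)
  qed
  show ?thesis using continuous bounded uniform unfolding LUC_def by simp
qed

subsection \<open>The finite intersection property of the images\<close>

lemma left_amenable_images_fip:
  fixes T :: "'a::{semigroup_mult,topological_space} \<Rightarrow> 'b::metric_space \<Rightarrow> 'b"
    and \<mu> :: "('a \<Rightarrow> real) \<Rightarrow> real"
  assumes \<mu>: "left_invariant_mean \<mu>"
    and repr: "\<And>s t. T (s * t) = T s \<circ> T t"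
    and joint: "continuous_on UNIV (\<lambda>(s, x). T s x)"
    and K: "compact K" "K \<noteq> {}" "\<And>s. T s ` K \<subseteq> K"
    and F: "finite F"
  shows "K \<inter> (\<Inter>s\<in>F. T s ` K) \<noteq> {}"
proof
  assume disjoint: "K \<inter> (\<Inter>s\<in>F. T s ` K) = {}"
  obtain x0 where x0: "x0 \<in> K" using K(2) by blast
  have closed: "closed (T s ` K)" for s
    by (rule closed_image_of_compact[OF joint K(1)])
  define \<phi> where "\<phi> y = (\<Sum>s\<in>F. infdist y (T s ` K))" for y
  have dist_LUC: "(\<lambda>t. infdist (T t x0) (T s ` K)) \<in> LUC" for s
    by (rule orbit_function_LUC[OF repr joint K(1,3) x0]) (intro continuous_intros)
  have dist_mean: "\<mu> (\<lambda>t. infdist (T t x0) (T s ` K)) = 0" for s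
  proof -
    have "(\<lambda>t. infdist (T (s * t) x0) (T s ` K)) = (\<lambda>t. 0)"
      unfolding repr comp_def using K(3) x0 by (intro ext infdist_zero) blast
    then show ?thesis
      using left_invariant_mean_translate[OF \<mu> dist_LUC] left_invariant_mean_zero[OF \<mu>] by metis
  qed
  have "\<phi> y > 0" if "y \<in> K" for y
  proof -
    obtain s where s: "s \<in> F" "y \<notin> T s ` K" using disjoint \<open>y \<in> K\<close> by blast
    show ?thesis unfolding \<phi>_def
        using infdist_pos_not_in_closed[OF closed _ s(2)] K(2)
      by (intro sum_pos2[OF F s(1)]) (simp_all add: infdist_nonneg)
  qed
  moreover have "continuous_on K \<phi>" unfolding \<phi>_def by (intro continuous_intros)
  then obtain ymin where "ymin \<in> K" "\<And>y. y \<in> K \<Longrightarrow> \<phi> ymin \<le> \<phi> y"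
    using continuous_attains_inf[OF K(1,2)] by blast
  ultimately obtain \<delta> where \<delta>: "\<delta> > 0" "\<And>y. y \<in> K \<Longrightarrow> \<delta> \<le> \<phi> y" by blast
  have "\<delta> \<le> \<mu> (\<lambda>t. \<phi> (T t x0))"
    using \<delta>(2) K(3) x0 unfolding \<phi>_def
    by (intro left_invariant_mean_lower_bound[OF \<mu>] LUC_sum F dist_LUC) blast
  also have "\<mu> (\<lambda>t. \<phi> (T t x0)) = 0"
    unfolding \<phi>_def using left_invariant_mean_sum[OF \<mu> F dist_LUC] dist_mean by simp
  finally show False using \<delta>(1) by simp
qed

lemma right_ideal_range_mult: "right_ideal (range ((*) w))"
  unfolding right_ideal_def by (auto simp: mult.assoc)

lemma right_ideal_closure:
  fixes I :: "'a::{semigroup_mult,t2_space} set"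
  assumes "semitopological TYPE('a)" "right_ideal I"
  shows "right_ideal (closure I)"
  unfolding right_ideal_def
proof (intro ballI allI)
  fix x s assume "x \<in> closure I"
  moreover have "(\<lambda>r. r * s) ` closure I \<subseteq> closure I"
  proof (rule image_closure_subset)
    show "continuous_on (closure I) (\<lambda>r. r * s)"
      using assms(1) continuous_on_subset unfolding semitopological_def by blast
    show "(\<lambda>r. r * s) ` I \<subseteq> closure I"
      using assms(2) closure_subset unfolding right_ideal_def by blast
  qed simp
  ultimately show "x * s \<in> closure I" by blast
qed

lemma right_ideal_Inter: "(\<And>I. I \<in> \<I> \<Longrightarrow> right_ideal I) \<Longrightarrow> right_ideal (\<Inter>\<I>)"
  unfolding right_ideal_def by blast

lemma left_reversible_Inter_nonempty:
  fixes \<I> :: "'a::{semigroup_mult,topological_space} set set"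
  assumes rev: "left_reversible TYPE('a)" and "finite \<I>"
    and "\<And>I. I \<in> \<I> \<Longrightarrow> I \<noteq> {} \<and> closed I \<and> right_ideal I"
  shows "\<Inter>\<I> \<noteq> {}"
  using assms(2,3)
proof (induction \<I> rule: finite_induct)
  case empty
  show ?case by simp
next
  case (insert I \<I>)
  then have "right_ideal (\<Inter>\<I>)" by (intro right_ideal_Inter) auto
  with insert rev show ?case unfolding left_reversible_def by (simp add: closed_Inter)
qed

lemma image_subset_if_in_closure_left_multiples:
  assumes repr: "\<And>s t. T (s * t) = T s \<circ> T t"
    and continuous: "\<And>x. continuous_on UNIV (\<lambda>s. T s x)"
    and closed: "closed (T s ` K)" and K: "\<And>s. T s ` K \<subseteq> K"
    and r: "r \<in> closure (range ((*) s))"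
  shows "T r ` K \<subseteq> T s ` K"
proof
  fix x assume "x \<in> T r ` K"
  then obtain y where y: "y \<in> K" "x = T r y" by blast
  have "(\<lambda>r. T r y) ` closure (range ((*) s)) \<subseteq> T s ` K"
  proof (rule image_closure_subset[OF _ closed])
    show "continuous_on (closure (range ((*) s))) (\<lambda>r. T r y)"
      using continuous continuous_on_subset by blast
    have "T u y \<in> K" for u using K y(1) by blast
    then show "(\<lambda>r. T r y) ` range ((*) s) \<subseteq> T s ` K" by (auto simp: repr)
  qed
  then show "x \<in> T s ` K" using r y(2) by blast
qed

lemma left_reversible_images_fip:
  fixes T :: "'a::{semigroup_mult,t2_space} \<Rightarrow> 'b::topological_space \<Rightarrow> 'b"
  assumes semitop: "semitopological TYPE('a)" and rev: "left_reversible TYPE('a)"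
    and repr: "\<And>s t. T (s * t) = T s \<circ> T t"
    and continuous: "\<And>x. continuous_on UNIV (\<lambda>s. T s x)"
    and closed: "\<And>s. closed (T s ` K)" and K: "K \<noteq> {}" "\<And>s. T s ` K \<subseteq> K"
    and F: "finite F"
  shows "K \<inter> (\<Inter>s\<in>F. T s ` K) \<noteq> {}"
proof -
  have "\<Inter>((\<lambda>s. closure (range ((*) s))) ` F) \<noteq> {}"
    by (intro left_reversible_Inter_nonempty[OF rev] finite_imageI F)
       (auto intro: right_ideal_closure[OF semitop right_ideal_range_mult])
  then obtain r where r: "\<And>s. s \<in> F \<Longrightarrow> r \<in> closure (range ((*) s))" by blast
  have "T r ` K \<subseteq> T s ` K" if "s \<in> F" for s
    by (rule image_subset_if_in_closure_left_multiples[OF repr continuous closed K(2) r[OF that]])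
  then have "T r ` K \<subseteq> K \<inter> (\<Inter>s\<in>F. T s ` K)" using K(2) by blast
  then show ?thesis using K(1) by blast
qed

lemma compact_images_common_point:
  fixes T :: "'a::{semigroup_mult,t2_space} \<Rightarrow> 'b::metric_space \<Rightarrow> 'b"
  assumes semitop: "semitopological TYPE('a)"
    and rev_or_amen: "left_reversible TYPE('a) \<or> left_amenable TYPE('a)"
    and repr: "\<And>s t. T (s * t) = T s \<circ> T t"
    and joint: "continuous_on UNIV (\<lambda>(s, x). T s x)"
    and K: "compact K" "K \<noteq> {}" "\<And>s. T s ` K \<subseteq> K"
  shows "\<exists>y\<in>K. \<forall>s. y \<in> T s ` K"
proof -
  have closed: "closed (T s ` K)" for s
    by (rule closed_image_of_compact[OF joint K(1)])
  have "K \<inter> \<Inter>(range (\<lambda>s. T s ` K)) \<noteq> {}"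
  proof (rule compact_imp_fip[OF K(1)])
    fix \<F> assume "finite \<F>" "\<F> \<subseteq> range (\<lambda>s. T s ` K)"
    then obtain F where F: "finite F" "\<F> = (\<lambda>s. T s ` K) ` F"
      by (meson finite_subset_image)
    from rev_or_amen show "K \<inter> \<Inter>\<F> \<noteq> {}"
      unfolding F(2)
    proof
      assume "left_reversible TYPE('a)"
      then show "K \<inter> (\<Inter>s\<in>F. T s ` K) \<noteq> {}"
        by (rule left_reversible_images_fip[OF semitop _ repr continuous_on_case_prod_fixed_snd[OF joint]
              closed K(2,3) F(1)])
    next
      assume "left_amenable TYPE('a)"
      then obtain \<mu> :: "('a \<Rightarrow> real) \<Rightarrow> real" where "left_invariant_mean \<mu>"
        unfolding left_amenable_def by blast
      then show "K \<inter> (\<Inter>s\<in>F. T s ` K) \<noteq> {}"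
        by (rule left_amenable_images_fip[OF _ repr joint K F(1)])
    qed
  qed (use closed in blast)
  then show ?thesis by blast
qed

theorem lemma3p13:
  fixes T :: "'a::{semigroup_mult,t2_space} \<Rightarrow> 'b::metric_space \<Rightarrow> 'b"
    and K :: "'b set"
  assumes semitop: "semitopological TYPE('a)"
    and rev_or_amen: "left_reversible TYPE('a) \<or> left_amenable TYPE('a)"
    and repr: "\<And>s t. T (s * t) = T s \<circ> T t"
    and joint: "continuous_on UNIV (\<lambda>(s, x). T s x)"
    and generated: "\<exists>G. (\<forall>g\<in>G. unif_asymp_regular g) \<and> range T = gen_semigroup G"
    and K: "compact K" "K \<noteq> {}" "\<And>s. T s ` K \<subseteq> K"
  shows "\<exists>x\<in>K. \<forall>s. T s x = x"
proof -
  obtain G where G: "\<And>g. g \<in> G \<Longrightarrow> unif_asymp_regular g" "range T = gen_semigroup G"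
    using generated by blast
  obtain y where y: "y \<in> K" "\<And>s. y \<in> T s ` K"
    using compact_images_common_point[OF semitop rev_or_amen repr joint K] by blast
  have "T s y = y" for s
  proof (rule gen_semigroup_common_fixed_point[OF G(1)])
    show "T s \<in> gen_semigroup G" using G(2) by blast
    fix f assume "f \<in> gen_semigroup G"
    then obtain t where "f = T t" using G(2) by (metis rangeE)
    then show "y \<in> range f" using y(2) by blast
  qed
  with y(1) show ?thesis by blast
qed

end
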